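(* Let $\gamma\in(0,2]$ and let $X=\theta^*+Z$ with $Z_1,\dots,Z_n$ i.i.d. with density $p_\gamma(x)\propto\exp(-|x|^\gamma)$. Then there is a universal constant $c>0$ such that $$\inf_{\widehat{\theta}}\sup_{\theta^*\in\Theta_3}\mathbb{E}\|\widehat{\theta}-\theta^*\|^2\geq c\{\log (en)\}^{2/\gamma},$$ where the infimum is over all measurable functions of $X$.
   Context: For reals $a\le b$, $(a:b]$ is the set of integers $i$ with $a<i\le b$. $\Theta_3$ is the set of $\theta\in\mathbb{R}^n$ for which there exist integers $0=a_0\le a_1\le a_2\le a_3=n$ and reals $\mu_1,\mu_2,\mu_3$ with $\theta_i=\mu_j$ for all $i\in(a_{j-1}:a_j]$. *)

theory Defs
  imports "HOL-Analysis.Analysis"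
begin

text \<open>Vectors in R^n are functions nat => real, indexed by {1..n}, extensional outside.\<close>

definition Theta3 :: "nat \<Rightarrow> (nat \<Rightarrow> real) set" where
  "Theta3 n = {\<theta> \<in> extensional {1..n}.
     \<exists>(a :: nat \<Rightarrow> nat) (\<mu> :: nat \<Rightarrow> real).
        a 0 = 0 \<and> a 0 \<le> a 1 \<and> a 1 \<le> a 2 \<and> a 2 \<le> a 3 \<and> a 3 = n \<and>
        (\<forall>j\<in>{1..3}. \<forall>i\<in>{a (j - 1)<..a j}. \<theta> i = \<mu> j)}"

definition p_gamma :: "real \<Rightarrow> real \<Rightarrow> real" where
  "p_gamma \<gamma> x = exp (- (\<bar>x\<bar> powr \<gamma>)) / (LBINT t. exp (- (\<bar>t\<bar> powr \<gamma>)))"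

definition noise :: "real \<Rightarrow> nat \<Rightarrow> (nat \<Rightarrow> real) measure" where
  "noise \<gamma> n = PiM {1..n} (\<lambda>_. density lborel (\<lambda>x. ennreal (p_gamma \<gamma> x)))"

definition shift :: "nat \<Rightarrow> (nat \<Rightarrow> real) \<Rightarrow> (nat \<Rightarrow> real) \<Rightarrow> (nat \<Rightarrow> real)" where
  "shift n \<theta> z = (\<lambda>i\<in>{1..n}. \<theta> i + z i)"

definition risk :: "real \<Rightarrow> nat \<Rightarrow> ((nat \<Rightarrow> real) \<Rightarrow> (nat \<Rightarrow> real)) \<Rightarrow> (nat \<Rightarrow> real) \<Rightarrow> ennreal" where
  "risk \<gamma> n est \<theta> = (\<integral>\<^sup>+ z. ennreal (\<Sum>i\<in>{1..n}. (est (shift n \<theta> z) i - \<theta> i)\<^sup>2) \<partial>noise \<gamma> n)"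

end

theory Submission
  imports Defs "HOL-Probability.Probability"
begin

text \<open>Le Cam's method with \<open>n + 1\<close> hypotheses, all in \<open>\<Theta>\<^sub>3\<close>: the zero vector and the spikes
  \<open>\<delta> e\<^sub>k\<close>. A good estimator must tell from the \<open>k\<close>-th coordinate which hypothesis holds, but
  moving the \<open>k\<close>-th noise coordinate by \<open>\<delta>\<close> changes probabilities by at most a factor \<open>M\<close>
  (up to an additive tail term \<open>q\<close>). Averaging over \<open>k\<close> gives a minimax risk of order
  \<open>\<delta>\<^sup>2 n / (n + M)\<close>. Since the density ratio is \<open>exp(|y|\<^sup>\<gamma> - |y - \<delta>|\<^sup>\<gamma>)\<close>, one can take
  \<open>\<delta>\<^sup>\<gamma> \<approx> log(e n)\<close> with \<open>M = O(n)\<close>: globally by subadditivity of \<open>t\<^sup>\<gamma>\<close> when \<open>\<gamma> \<le> 1\<close>, and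
  near the spike, with a small tail term, when \<open>1 < \<gamma> \<le> 2\<close>.\<close>

lemma exp_neg_abs_powr_le_inverse_square:
  fixes \<gamma> t :: real and m :: nat
  assumes "0 < \<gamma>" "1 \<le> m" "2 \<le> \<gamma> * m" "1 \<le> \<bar>t\<bar>"
  shows "exp (- (\<bar>t\<bar> powr \<gamma>)) \<le> real m ^ m / t\<^sup>2"
proof -
  define s where "s = \<bar>t\<bar> powr \<gamma>"
  have s: "1 \<le> s" unfolding s_def using assms by (simp add: ge_one_powr_ge_zero)
  have m: "0 < real m" using assms by simp
  \<comment> \<open>\<open>exp s \<ge> (s/m)^m\<close>, and \<open>s^m = |t|^(\<gamma> m) \<ge> t^2\<close>.\<close>
  have "(s / m) ^ m \<le> exp (s / m) ^ m"
    using s m by (intro power_mono) (auto intro: order_trans[OF _ exp_ge_add_one_self])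
  also have "\<dots> = exp s"
    using m by (simp add: exp_of_nat_mult[symmetric])
  finally have exp_s: "(s / m) ^ m \<le> exp s" .
  have "t\<^sup>2 = \<bar>t\<bar> powr 2"
    using assms by (simp add: powr_realpow)
  also have "\<dots> \<le> \<bar>t\<bar> powr (\<gamma> * m)"
    using assms by (intro powr_mono) auto
  also have "\<dots> = s ^ m"
    unfolding s_def using assms by (simp add: powr_powr powr_realpow[symmetric])
  finally have t_sq: "t\<^sup>2 \<le> s ^ m" .
  have "exp (- s) = 1 / exp s"
    by (simp add: exp_minus field_simps)
  also have "\<dots> \<le> 1 / (s / m) ^ m"
    using exp_s s m by (intro divide_left_mono) auto
  also have "\<dots> = real m ^ m / s ^ m"
    by (simp add: power_divide)
  also have "\<dots> \<le> real m ^ m / t\<^sup>2"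
    using t_sq s assms by (intro divide_left_mono) auto
  finally show ?thesis unfolding s_def .
qed

lemma nn_integral_inverse_square_outside:
  fixes a :: real
  assumes "0 < a"
  shows "(\<integral>\<^sup>+t. ennreal (indicator {t. a \<le> \<bar>t\<bar>} t * (1 / t\<^sup>2)) \<partial>lborel) = ennreal (2 / a)"
proof -
  define f where "f x = indicator {a..} x * (1 / x\<^sup>2)" for x :: real
  have [measurable]: "f \<in> borel_measurable borel"
    unfolding f_def by measurable
  have "((\<lambda>x. 1 / x\<^sup>2) has_integral 1 / a) {a..}"
    using has_integral_inverse_power_to_inf[of 2 a] assms by simp
  hence right: "(\<integral>\<^sup>+t. ennreal (f t) \<partial>lborel) = ennreal (1 / a)"
    unfolding f_def by (rule nn_integral_has_integral_lebesgue[rotated]) simp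
  have left: "(\<integral>\<^sup>+t. ennreal (f (-t)) \<partial>lborel) = (\<integral>\<^sup>+t. ennreal (f t) \<partial>lborel)"
    using nn_integral_real_affine[of "\<lambda>x. ennreal (f x)" "-1" 0] by simp
  have "(\<integral>\<^sup>+t. ennreal (indicator {t. a \<le> \<bar>t\<bar>} t * (1 / t\<^sup>2)) \<partial>lborel)
      = (\<integral>\<^sup>+t. ennreal (f t) + ennreal (f (-t)) \<partial>lborel)"
    using assms by (intro nn_integral_cong) (auto simp: f_def indicator_def)
  also have "\<dots> = ennreal (2 / a)"
    using assms by (simp add: nn_integral_add left right ennreal_plus[symmetric] del: ennreal_plus)
  finally show ?thesis .
qed

lemma integrable_exp_neg_abs_powr:
  fixes \<gamma> :: real
  assumes "0 < \<gamma>"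
  shows "integrable lborel (\<lambda>t. exp (- (\<bar>t\<bar> powr \<gamma>)))"
proof (rule integrableI_bounded)
  define m where "m = nat \<lceil>2 / \<gamma>\<rceil>"
  have "2 / \<gamma> \<le> m"
    unfolding m_def by linarith
  hence m: "1 \<le> m" "2 \<le> \<gamma> * m"
    using assms by (cases m; simp add: field_simps)+
  define K where "K = real m ^ m"
  have bound: "ennreal (norm (exp (- (\<bar>t\<bar> powr \<gamma>))))
      \<le> indicator {-1..1} t + ennreal K * ennreal (indicator {t. 1 \<le> \<bar>t\<bar>} t * (1 / t\<^sup>2))" for t :: real
  proof (cases "1 \<le> \<bar>t\<bar>")
    case True
    have "ennreal (norm (exp (- (\<bar>t\<bar> powr \<gamma>))))
        \<le> ennreal K * ennreal (indicator {t. 1 \<le> \<bar>t\<bar>} t * (1 / t\<^sup>2))"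
      using exp_neg_abs_powr_le_inverse_square[OF assms m True] True
      by (simp add: K_def ennreal_mult'[symmetric] ennreal_leI)
    thus ?thesis
      by (rule order_trans) (simp add: add_increasing)
  qed (auto simp: indicator_def)
  have "(\<integral>\<^sup>+t. ennreal (norm (exp (- (\<bar>t\<bar> powr \<gamma>)))) \<partial>lborel)
      \<le> (\<integral>\<^sup>+t. indicator {-1..1} t + ennreal K * ennreal (indicator {t. 1 \<le> \<bar>t\<bar>} t * (1 / t\<^sup>2)) \<partial>lborel)"
    by (intro nn_integral_mono bound)
  also have "\<dots> = 2 + ennreal K * 2"
    using nn_integral_inverse_square_outside[of 1] by (simp add: nn_integral_add nn_integral_cmult)
  finally show "(\<integral>\<^sup>+t. ennreal (norm (exp (- (\<bar>t\<bar> powr \<gamma>)))) \<partial>lborel) < \<infinity>"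
    by (simp add: order_le_less_trans ennreal_mult_less_top)
qed simp

definition gamma_normalizer :: "real \<Rightarrow> real" where
  "gamma_normalizer \<gamma> = (LBINT t. exp (- (\<bar>t\<bar> powr \<gamma>)))"

lemma p_gamma_eq: "p_gamma \<gamma> x = exp (- (\<bar>x\<bar> powr \<gamma>)) / gamma_normalizer \<gamma>"
  unfolding p_gamma_def gamma_normalizer_def ..

lemma gamma_normalizer_ge:
  assumes "0 < \<gamma>"
  shows "2 * exp (-1) \<le> gamma_normalizer \<gamma>"
proof -
  have "ennreal (2 * exp (-1)) = (\<integral>\<^sup>+t. ennreal (exp (-1)) * indicator {-1..1} (t::real) \<partial>lborel)"
    by (subst nn_integral_cmult_indicator) (auto simp: ennreal_mult' mult.commute)
  also have "\<dots> \<le> (\<integral>\<^sup>+t. ennreal (exp (- (\<bar>t\<bar> powr \<gamma>))) \<partial>lborel)"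
  proof (intro nn_integral_mono)
    fix t :: real
    have "t \<in> {-1..1} \<Longrightarrow> \<bar>t\<bar> powr \<gamma> \<le> 1"
      using assms powr_mono2[of \<gamma> "\<bar>t\<bar>" 1] by auto
    thus "ennreal (exp (-1)) * indicator {-1..1} t \<le> ennreal (exp (- (\<bar>t\<bar> powr \<gamma>)))"
      by (auto simp: indicator_def)
  qed
  also have "\<dots> = ennreal (gamma_normalizer \<gamma>)"
    unfolding gamma_normalizer_def
    by (rule nn_integral_eq_integral[OF integrable_exp_neg_abs_powr[OF assms]]) simp
  finally show ?thesis
    by (subst (asm) ennreal_le_iff) (auto simp: gamma_normalizer_def)
qed

lemma gamma_normalizer_pos: "0 < \<gamma> \<Longrightarrow> 0 < gamma_normalizer \<gamma>"
  using gamma_normalizer_ge[of \<gamma>] by (smt (verit) exp_gt_zero)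

lemma p_gamma_nonneg: "0 < \<gamma> \<Longrightarrow> 0 \<le> p_gamma \<gamma> x"
  using gamma_normalizer_pos[of \<gamma>] unfolding p_gamma_eq by simp

lemma borel_measurable_p_gamma [measurable]: "p_gamma \<gamma> \<in> borel_measurable borel"
  unfolding p_gamma_def by measurable

abbreviation noise_marginal :: "real \<Rightarrow> real measure" where
  "noise_marginal \<gamma> \<equiv> density lborel (\<lambda>x. ennreal (p_gamma \<gamma> x))"

lemma prob_space_noise_marginal:
  assumes "0 < \<gamma>"
  shows "prob_space (noise_marginal \<gamma>)"
proof (rule prob_spaceI)
  have C: "0 < gamma_normalizer \<gamma>"
    using gamma_normalizer_pos[OF assms] .
  have "emeasure (noise_marginal \<gamma>) UNIV
      = (\<integral>\<^sup>+x. ennreal (exp (- (\<bar>x\<bar> powr \<gamma>))) * ennreal (1 / gamma_normalizer \<gamma>) \<partial>lborel)"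
    using C by (subst emeasure_density) (auto intro!: nn_integral_cong simp: p_gamma_eq ennreal_mult[symmetric])
  also have "\<dots> = ennreal (gamma_normalizer \<gamma>) * ennreal (1 / gamma_normalizer \<gamma>)"
    unfolding gamma_normalizer_def
    by (subst nn_integral_multc) (auto simp: nn_integral_eq_integral[OF integrable_exp_neg_abs_powr[OF assms]])
  also have "\<dots> = 1"
    using C by (simp add: ennreal_mult[symmetric])
  finally show "emeasure (noise_marginal \<gamma>) (space (noise_marginal \<gamma>)) = 1"
    by simp
qed

lemma prob_space_noise: "0 < \<gamma> \<Longrightarrow> prob_space (noise \<gamma> n)"
  unfolding noise_def by (intro prob_space_PiM prob_space_noise_marginal)

lemma powr_add_le_add_powr:
  fixes a b \<gamma> :: real
  assumes "0 \<le> a" "0 \<le> b" "0 < \<gamma>" "\<gamma> \<le> 1"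
  shows "(a + b) powr \<gamma> \<le> a powr \<gamma> + b powr \<gamma>"
proof (cases "a + b = 0")
  case False
  define s where "s = a + b"
  have s: "0 < s"
    using False assms unfolding s_def by simp
  \<comment> \<open>Concavity: \<open>x/s \<le> (x/s)^\<gamma>\<close> for \<open>0 \<le> x \<le> s\<close>; add the two instances.\<close>
  have part: "s powr \<gamma> * (x / s) \<le> x powr \<gamma>" if "0 \<le> x" "x \<le> s" for x
  proof -
    have "(x / s) powr 1 \<le> (x / s) powr \<gamma>"
      using that s assms by (intro powr_mono') auto
    hence "x / s \<le> (x / s) powr \<gamma>"
      using that s by simp
    hence "s powr \<gamma> * (x / s) \<le> s powr \<gamma> * (x / s) powr \<gamma>"
      by (intro mult_left_mono) auto
    also have "\<dots> = x powr \<gamma>"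
      using that s by (simp add: powr_mult[symmetric])
    finally show ?thesis .
  qed
  have "s powr \<gamma> = s powr \<gamma> * (a / s) + s powr \<gamma> * (b / s)"
    using s unfolding s_def by (simp add: field_simps add_divide_distrib[symmetric])
  also have "\<dots> \<le> a powr \<gamma> + b powr \<gamma>"
    using part[of a] part[of b] assms unfolding s_def by (intro add_mono) auto
  finally show ?thesis unfolding s_def .
qed (use assms in auto)

lemma p_gamma_shift_le:
  assumes "0 < \<gamma>" "\<gamma> \<le> 1" "0 \<le> \<delta>"
  shows "p_gamma \<gamma> (y - \<delta>) \<le> exp (\<delta> powr \<gamma>) * p_gamma \<gamma> y"
proof -
  have "\<bar>y\<bar> powr \<gamma> \<le> (\<bar>y - \<delta>\<bar> + \<delta>) powr \<gamma>"
    using assms by (intro powr_mono2) auto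
  also have "\<dots> \<le> \<bar>y - \<delta>\<bar> powr \<gamma> + \<delta> powr \<gamma>"
    using assms by (intro powr_add_le_add_powr) auto
  finally have "exp (- (\<bar>y - \<delta>\<bar> powr \<gamma>)) \<le> exp (\<delta> powr \<gamma>) * exp (- (\<bar>y\<bar> powr \<gamma>))"
    by (simp add: exp_add[symmetric])
  thus ?thesis
    using gamma_normalizer_pos[OF assms(1)] unfolding p_gamma_eq by (simp add: divide_right_mono)
qed

lemma p_gamma_shift_le_near:
  assumes "0 < \<gamma>" "0 \<le> \<delta>" "\<bar>y - \<delta>\<bar> \<le> \<delta>"
  shows "p_gamma \<gamma> (y - \<delta>) \<le> exp ((2 * \<delta>) powr \<gamma>) * p_gamma \<gamma> y"
proof -
  have "\<bar>y\<bar> powr \<gamma> \<le> (2 * \<delta>) powr \<gamma>"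
    using assms by (intro powr_mono2) auto
  hence "- (\<bar>y - \<delta>\<bar> powr \<gamma>) \<le> (2 * \<delta>) powr \<gamma> + - (\<bar>y\<bar> powr \<gamma>)"
    using powr_ge_zero[of "\<bar>y - \<delta>\<bar>" \<gamma>] by linarith
  hence "exp (- (\<bar>y - \<delta>\<bar> powr \<gamma>)) \<le> exp ((2 * \<delta>) powr \<gamma>) * exp (- (\<bar>y\<bar> powr \<gamma>))"
    by (simp flip: exp_add)
  thus ?thesis
    using gamma_normalizer_pos[OF assms(1)] unfolding p_gamma_eq by (simp add: divide_right_mono)
qed

lemma emeasure_noise_marginal_tail_le:
  assumes "1 \<le> \<gamma>" "1 \<le> \<delta>"
  shows "emeasure (noise_marginal \<gamma>) {t. \<delta> < \<bar>t\<bar>} \<le> ennreal (4 * exp 1 / \<delta>)"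
proof -
  have g: "0 < \<gamma>"
    using assms by simp
  define C where "C = gamma_normalizer \<gamma>"
  have C: "0 < C" "2 * exp (-1) \<le> C"
    unfolding C_def using gamma_normalizer_pos[OF g] gamma_normalizer_ge[OF g] by auto
  have "emeasure (noise_marginal \<gamma>) {t. \<delta> < \<bar>t\<bar>}
      = (\<integral>\<^sup>+x. ennreal (p_gamma \<gamma> x) * indicator {t. \<delta> < \<bar>t\<bar>} x \<partial>lborel)"
    by (subst emeasure_density) auto
  also have "\<dots> \<le> (\<integral>\<^sup>+x. ennreal (4 / C) * ennreal (indicator {t. \<delta> \<le> \<bar>t\<bar>} x * (1 / x\<^sup>2)) \<partial>lborel)"
  proof (rule nn_integral_mono)
    fix x :: real
    show "ennreal (p_gamma \<gamma> x) * indicator {t. \<delta> < \<bar>t\<bar>} x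
        \<le> ennreal (4 / C) * ennreal (indicator {t. \<delta> \<le> \<bar>t\<bar>} x * (1 / x\<^sup>2))"
    proof (cases "\<delta> < \<bar>x\<bar>")
      case True
      have "exp (- (\<bar>x\<bar> powr \<gamma>)) \<le> real 2 ^ 2 / x\<^sup>2"
        using True assms by (intro exp_neg_abs_powr_le_inverse_square) auto
      hence "p_gamma \<gamma> x \<le> 4 / C * (1 / x\<^sup>2)"
        using C unfolding p_gamma_eq C_def[symmetric] by (simp add: divide_right_mono field_simps)
      thus ?thesis
        using True C by (simp add: ennreal_mult[symmetric] ennreal_leI)
    qed simp
  qed
  also have "\<dots> = ennreal (4 / C) * ennreal (2 / \<delta>)"
    using nn_integral_inverse_square_outside[of \<delta>] assms by (simp add: nn_integral_cmult)
  also have "\<dots> \<le> ennreal (4 * exp 1 / \<delta>)"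
  proof -
    have "1 / C \<le> exp 1 / 2"
      using C by (simp add: field_simps exp_minus)
    hence "4 / C * (2 / \<delta>) \<le> 4 * exp 1 / \<delta>"
      using assms mult_right_mono[of "1 / C" "exp 1 / 2" "8 / \<delta>"] by (simp add: field_simps)
    thus ?thesis
      using C assms by (simp add: ennreal_mult[symmetric] ennreal_leI)
  qed
  finally show ?thesis .
qed

definition shift_dominated :: "real measure \<Rightarrow> real \<Rightarrow> real \<Rightarrow> real \<Rightarrow> bool" where
  "shift_dominated \<mu> \<delta> M q \<longleftrightarrow>
     (\<forall>g \<in> borel_measurable \<mu>. (\<forall>x. g x \<le> 1) \<longrightarrow>
        (\<integral>\<^sup>+y. g (y + \<delta>) \<partial>\<mu>) \<le> ennreal M * (\<integral>\<^sup>+y. g y \<partial>\<mu>) + ennreal q)"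

lemma shift_dominated_density:
  fixes p :: "real \<Rightarrow> real" and E :: "real set"
  assumes [measurable]: "p \<in> borel_measurable borel" "E \<in> sets borel"
    and p_nonneg: "\<And>x. 0 \<le> p x" and "0 \<le> M"
    and ratio: "\<And>y. p (y - \<delta>) \<le> M * p y + p (y - \<delta>) * indicator E (y - \<delta>)"
    and "emeasure (density lborel p) E \<le> ennreal q"
  shows "shift_dominated (density lborel p) \<delta> M q"
  unfolding shift_dominated_def
proof (intro ballI impI)
  fix g :: "real \<Rightarrow> ennreal"
  assume "g \<in> borel_measurable (density lborel p)" and g_le: "\<forall>x. g x \<le> 1"
  hence [measurable]: "g \<in> borel_measurable borel"
    using measurable_cong_sets[OF sets_density refl] by simp
  have translate: "(\<integral>\<^sup>+x. f x \<partial>lborel) = (\<integral>\<^sup>+x. f (\<delta> + x) \<partial>lborel)"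
    if [measurable]: "f \<in> borel_measurable borel" for f :: "real \<Rightarrow> ennreal"
    using nn_integral_real_affine[of f 1 \<delta>] by simp
  have "(\<integral>\<^sup>+y. g (y + \<delta>) \<partial>density lborel p) = (\<integral>\<^sup>+y. ennreal (p y) * g (y + \<delta>) \<partial>lborel)"
    by (simp add: nn_integral_density)
  also have "\<dots> = (\<integral>\<^sup>+y. ennreal (p (y - \<delta>)) * g y \<partial>lborel)"
    by (subst translate) (auto simp: add.commute)
  also have "\<dots> \<le> (\<integral>\<^sup>+y. ennreal M * (ennreal (p y) * g y) + ennreal (p (y - \<delta>) * indicator E (y - \<delta>)) \<partial>lborel)"
  proof (rule nn_integral_mono)
    fix y :: real
    have "ennreal (p (y - \<delta>)) * g y \<le> ennreal (M * p y + p (y - \<delta>) * indicator E (y - \<delta>)) * g y"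
      using ratio[of y] by (intro mult_right_mono ennreal_leI) auto
    also have "\<dots> = ennreal M * (ennreal (p y) * g y) + ennreal (p (y - \<delta>) * indicator E (y - \<delta>)) * g y"
      using assms by (simp add: ennreal_plus ennreal_mult distrib_right mult.assoc)
    also have "\<dots> \<le> ennreal M * (ennreal (p y) * g y) + ennreal (p (y - \<delta>) * indicator E (y - \<delta>))"
      using g_le mult_left_mono[of "g y" 1] by (intro add_left_mono) auto
    finally show "ennreal (p (y - \<delta>)) * g y \<le> \<dots>" .
  qed
  also have "\<dots> = ennreal M * (\<integral>\<^sup>+y. ennreal (p y) * g y \<partial>lborel)
      + (\<integral>\<^sup>+y. ennreal (p (y - \<delta>) * indicator E (y - \<delta>)) \<partial>lborel)"
    by (subst nn_integral_add) (auto simp: nn_integral_cmult)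
  also have "(\<integral>\<^sup>+y. ennreal (p (y - \<delta>) * indicator E (y - \<delta>)) \<partial>lborel) = emeasure (density lborel p) E"
    by (subst translate) (auto simp: emeasure_density indicator_def intro!: nn_integral_cong)
  also have "(\<integral>\<^sup>+y. ennreal (p y) * g y \<partial>lborel) = (\<integral>\<^sup>+y. g y \<partial>density lborel p)"
    by (simp add: nn_integral_density)
  finally show "(\<integral>\<^sup>+y. g (y + \<delta>) \<partial>density lborel p) \<le> ennreal M * (\<integral>\<^sup>+y. g y \<partial>density lborel p) + ennreal q"
    using assms(6) by (meson add_left_mono order_trans)
qed

lemma shift_dominated_noise_marginal_heavy_tail:
  assumes "0 < \<gamma>" "\<gamma> \<le> 1" "0 \<le> \<delta>"
  shows "shift_dominated (noise_marginal \<gamma>) \<delta> (exp (\<delta> powr \<gamma>)) 0"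
proof (rule shift_dominated_density[where E = "{}"])
  show "p_gamma \<gamma> (y - \<delta>) \<le> exp (\<delta> powr \<gamma>) * p_gamma \<gamma> y + p_gamma \<gamma> (y - \<delta>) * indicator {} (y - \<delta>)" for y
    using p_gamma_shift_le[OF assms] by simp
qed (simp_all add: p_gamma_nonneg assms)

lemma shift_dominated_noise_marginal:
  assumes "1 \<le> \<gamma>" "1 \<le> \<delta>"
  shows "shift_dominated (noise_marginal \<gamma>) \<delta> (exp ((2 * \<delta>) powr \<gamma>)) (4 * exp 1 / \<delta>)"
proof (rule shift_dominated_density[where E = "{t. \<delta> < \<bar>t\<bar>}"])
  have g: "0 < \<gamma>"
    using assms by simp
  show "p_gamma \<gamma> (y - \<delta>) \<le> exp ((2 * \<delta>) powr \<gamma>) * p_gamma \<gamma> y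
      + p_gamma \<gamma> (y - \<delta>) * indicator {t. \<delta> < \<bar>t\<bar>} (y - \<delta>)" for y
    using p_gamma_shift_le_near[OF g, of \<delta> y] p_gamma_nonneg[OF g, of y] p_gamma_nonneg[OF g, of "y - \<delta>"] assms
    by (cases "\<bar>y - \<delta>\<bar> \<le> \<delta>") auto
qed (use assms in \<open>simp_all add: p_gamma_nonneg emeasure_noise_marginal_tail_le\<close>)

lemma measurable_coordinate_shift:
  fixes \<mu> :: "real measure"
  assumes sets: "sets \<mu> = sets borel" and "k \<in> I"
  shows "(\<lambda>z. z(k := z k + \<delta>)) \<in> PiM I (\<lambda>_. \<mu>) \<rightarrow>\<^sub>M PiM I (\<lambda>_. \<mu>)"
proof (rule measurable_PiM_single')
  fix i assume i: "i \<in> I"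
  show "(\<lambda>z. (z(k := z k + \<delta>)) i) \<in> PiM I (\<lambda>_. \<mu>) \<rightarrow>\<^sub>M \<mu>"
  proof (cases "i = k")
    case True
    have [measurable]: "(\<lambda>z. z k) \<in> borel_measurable (PiM I (\<lambda>_. \<mu>))"
      using measurable_component_singleton[OF assms(2), of "\<lambda>_. \<mu>"]
      by (simp add: measurable_cong_sets[OF refl sets])
    have "(\<lambda>z. z k + \<delta>) \<in> borel_measurable (PiM I (\<lambda>_. \<mu>))"
      by measurable
    thus ?thesis
      using True by (simp add: measurable_cong_sets[OF refl sets])
  qed (use measurable_component_singleton[OF i, of "\<lambda>_. \<mu>"] in simp)
next
  show "(\<lambda>z. z(k := z k + \<delta>)) \<in> space (PiM I (\<lambda>_. \<mu>)) \<rightarrow> (\<Pi>\<^sub>E i\<in>I. space \<mu>)"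
    using sets_eq_imp_space_eq[OF sets] assms(2) by (auto simp: space_PiM PiE_def extensional_def Pi_def)
qed

lemma shift_dominated_PiM:
  fixes \<mu> :: "real measure" and H :: "(nat \<Rightarrow> real) \<Rightarrow> ennreal"
  assumes "prob_space \<mu>" "sets \<mu> = sets borel" "finite I" "k \<in> I"
    and H_meas: "H \<in> borel_measurable (PiM I (\<lambda>_. \<mu>))" and H_le: "\<And>x. H x \<le> 1"
    and dom: "shift_dominated \<mu> \<delta> M q"
  shows "(\<integral>\<^sup>+z. H (z(k := z k + \<delta>)) \<partial>PiM I (\<lambda>_. \<mu>)) \<le> ennreal M * (\<integral>\<^sup>+z. H z \<partial>PiM I (\<lambda>_. \<mu>)) + ennreal q"
proof -
  interpret \<mu>: prob_space \<mu> by fact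
  interpret product_prob_space "\<lambda>_::nat. \<mu>" by unfold_locales
  define J where "J = I - {k}"
  have I: "I = insert k J" "k \<notin> J" "finite J"
    using assms unfolding J_def by auto
  interpret J: prob_space "PiM J (\<lambda>_. \<mu>)"
    by (rule prob_space_PiM) (simp add: assms)
  note H_meas' = H_meas[unfolded I(1)]
  have shifted_meas: "(\<lambda>z. H (z(k := z k + \<delta>))) \<in> borel_measurable (PiM (insert k J) (\<lambda>_. \<mu>))"
    using measurable_coordinate_shift[OF assms(2) insertI1] H_meas' by (rule measurable_compose)
  have section_meas: "(\<lambda>y. H (x(k := y))) \<in> borel_measurable \<mu>" if "x \<in> space (PiM J (\<lambda>_. \<mu>))" for x
    using measurable_compose[OF measurable_component_update[OF that I(2)] H_meas'] .
  \<comment> \<open>Fubini: integrate the \<open>k\<close>-th coordinate first, where \<open>shift_dominated\<close> applies.\<close>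
  have "(\<integral>\<^sup>+z. H (z(k := z k + \<delta>)) \<partial>PiM I (\<lambda>_. \<mu>))
      = (\<integral>\<^sup>+x. (\<integral>\<^sup>+y. H (x(k := y + \<delta>)) \<partial>\<mu>) \<partial>PiM J (\<lambda>_. \<mu>))"
    unfolding I(1) by (subst product_nn_integral_insert[OF I(3,2) shifted_meas]) simp
  also have "\<dots> \<le> (\<integral>\<^sup>+x. ennreal M * (\<integral>\<^sup>+y. H (x(k := y)) \<partial>\<mu>) + ennreal q \<partial>PiM J (\<lambda>_. \<mu>))"
  proof (rule nn_integral_mono)
    fix x assume "x \<in> space (PiM J (\<lambda>_. \<mu>))"
    show "(\<integral>\<^sup>+y. H (x(k := y + \<delta>)) \<partial>\<mu>) \<le> ennreal M * (\<integral>\<^sup>+y. H (x(k := y)) \<partial>\<mu>) + ennreal q"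
      by (rule dom[unfolded shift_dominated_def, rule_format]) (use section_meas[OF \<open>x \<in> _\<close>] H_le in auto)
  qed
  also have "\<dots> = ennreal M * (\<integral>\<^sup>+x. (\<integral>\<^sup>+y. H (x(k := y)) \<partial>\<mu>) \<partial>PiM J (\<lambda>_. \<mu>)) + ennreal q"
    using \<mu>.borel_measurable_nn_integral_fst[OF measurable_compose[OF measurable_add_dim H_meas']]
    by (subst nn_integral_add) (auto simp: nn_integral_cmult J.emeasure_space_1)
  also have "(\<integral>\<^sup>+x. (\<integral>\<^sup>+y. H (x(k := y)) \<partial>\<mu>) \<partial>PiM J (\<lambda>_. \<mu>)) = (\<integral>\<^sup>+z. H z \<partial>PiM I (\<lambda>_. \<mu>))"
    unfolding I(1) by (subst product_nn_integral_insert[OF I(3,2) H_meas']) simp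
  finally show ?thesis .
qed

definition spike :: "nat \<Rightarrow> nat \<Rightarrow> real \<Rightarrow> nat \<Rightarrow> real" where
  "spike n k \<delta> = (\<lambda>i\<in>{1..n}. if i = k then \<delta> else 0)"

lemma spike_in_Theta3:
  assumes "k \<in> {1..n}"
  shows "spike n k \<delta> \<in> Theta3 n"
  unfolding Theta3_def spike_def
proof (intro CollectI conjI restrict_extensional ballI
    exI[of _ "\<lambda>j. if j = 0 then 0 else if j = 1 then k - 1 else if j = 2 then k else n"]
    exI[of _ "\<lambda>j. if j = 2 then \<delta> else 0"])
  fix j i
  assume "j \<in> {1..(3::nat)}"
    and "i \<in> {(if j - 1 = 0 then 0 else if j - 1 = 1 then k - 1 else if j - 1 = 2 then k else n)<..
              (if j = 0 then 0 else if j = 1 then k - 1 else if j = 2 then k else n)}"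
  moreover have "j = 1 \<or> j = 2 \<or> j = 3"
    using \<open>j \<in> {1..3}\<close> by auto
  ultimately show "(\<lambda>i\<in>{1..n}. if i = k then \<delta> else 0) i = (if j = 2 then \<delta> else 0)"
    using assms by auto
qed (use assms in auto)

lemma sets_noise: "sets (noise \<gamma> n) = sets (PiM {1..n} (\<lambda>_. (borel :: real measure)))"
  unfolding noise_def by (intro sets_PiM_cong) auto

lemma borel_measurable_est_shift [measurable]:
  assumes "est \<in> PiM {1..n} (\<lambda>_. borel) \<rightarrow>\<^sub>M PiM {1..n} (\<lambda>_. (borel :: real measure))"
    and "k \<in> {1..n}"
  shows "(\<lambda>z. est (Defs.shift n \<theta> z) k) \<in> borel_measurable (noise \<gamma> n)"
proof -
  have "Defs.shift n \<theta> \<in> noise \<gamma> n \<rightarrow>\<^sub>M PiM {1..n} (\<lambda>_. (borel :: real measure))"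
    unfolding measurable_cong_sets[OF sets_noise refl] Defs.shift_def by measurable
  from measurable_compose[OF this assms(1)] show ?thesis
    by (rule measurable_compose[OF _ measurable_component_singleton[OF assms(2)]])
qed

definition coord_far_prob ::
    "real \<Rightarrow> nat \<Rightarrow> ((nat \<Rightarrow> real) \<Rightarrow> nat \<Rightarrow> real) \<Rightarrow> (nat \<Rightarrow> real) \<Rightarrow> real \<Rightarrow> nat \<Rightarrow> ennreal" where
  "coord_far_prob \<gamma> n est \<theta> c k = (\<integral>\<^sup>+z. indicator {x. c \<le> \<bar>est x k\<bar>} (Defs.shift n \<theta> z) \<partial>noise \<gamma> n)"

lemma borel_measurable_coord_far_indicator [measurable]:
  assumes [measurable]: "est \<in> PiM {1..n} (\<lambda>_. borel) \<rightarrow>\<^sub>M PiM {1..n} (\<lambda>_. (borel :: real measure))"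
    and [measurable]: "k \<in> {1..n}"
  shows "(\<lambda>z. indicator {x. c \<le> \<bar>est x k\<bar>} (Defs.shift n \<theta> z) :: ennreal) \<in> borel_measurable (noise \<gamma> n)"
  unfolding indicator_def mem_Collect_eq by measurable

lemma risk_zero_ge_coord_far_probs:
  assumes est: "est \<in> PiM {1..n} (\<lambda>_. borel) \<rightarrow>\<^sub>M PiM {1..n} (\<lambda>_. (borel :: real measure))"
    and "0 \<le> c"
  shows "ennreal (c\<^sup>2) * (\<Sum>k\<in>{1..n}. coord_far_prob \<gamma> n est (\<lambda>i\<in>{1..n}. 0) c k)
      \<le> risk \<gamma> n est (\<lambda>i\<in>{1..n}. 0)"
proof -
  let ?x = "\<lambda>z. Defs.shift n (\<lambda>i\<in>{1..n}. 0) z"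
  have "ennreal (c\<^sup>2) * (\<Sum>k\<in>{1..n}. coord_far_prob \<gamma> n est (\<lambda>i\<in>{1..n}. 0) c k)
      = (\<Sum>k\<in>{1..n}. \<integral>\<^sup>+z. ennreal (c\<^sup>2) * indicator {x. c \<le> \<bar>est x k\<bar>} (?x z) \<partial>noise \<gamma> n)"
    unfolding coord_far_prob_def sum_distrib_left
    using est by (intro sum.cong refl nn_integral_cmult[symmetric]) measurable
  also have "\<dots> = (\<integral>\<^sup>+z. (\<Sum>k\<in>{1..n}. ennreal (c\<^sup>2) * indicator {x. c \<le> \<bar>est x k\<bar>} (?x z)) \<partial>noise \<gamma> n)"
    using est by (intro nn_integral_sum[symmetric]) measurable
  also have "\<dots> \<le> (\<integral>\<^sup>+z. ennreal (\<Sum>k\<in>{1..n}. (est (?x z) k - (\<lambda>i\<in>{1..n}. 0) k)\<^sup>2) \<partial>noise \<gamma> n)"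
  proof (rule nn_integral_mono)
    fix z
    have "ennreal (c\<^sup>2) * indicator {x. c \<le> \<bar>est x k\<bar>} (?x z) \<le> ennreal ((est (?x z) k)\<^sup>2)" for k
      using abs_le_square_iff[of c "est (?x z) k"] assms(2) by (auto simp: indicator_def ennreal_leI)
    hence "(\<Sum>k\<in>{1..n}. ennreal (c\<^sup>2) * indicator {x. c \<le> \<bar>est x k\<bar>} (?x z))
        \<le> (\<Sum>k\<in>{1..n}. ennreal ((est (?x z) k - (\<lambda>i\<in>{1..n}. 0) k)\<^sup>2))"
      by (intro sum_mono) simp
    also have "\<dots> = ennreal (\<Sum>k\<in>{1..n}. (est (?x z) k - (\<lambda>i\<in>{1..n}. 0) k)\<^sup>2)"
      by (simp add: sum_ennreal)
    finally show "(\<Sum>k\<in>{1..n}. ennreal (c\<^sup>2) * indicator {x. c \<le> \<bar>est x k\<bar>} (?x z))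
        \<le> ennreal (\<Sum>k\<in>{1..n}. (est (?x z) k - (\<lambda>i\<in>{1..n}. 0) k)\<^sup>2)" .
  qed
  finally show ?thesis
    unfolding risk_def .
qed

lemma risk_spike_ge:
  assumes "0 < \<gamma>" and est: "est \<in> PiM {1..n} (\<lambda>_. borel) \<rightarrow>\<^sub>M PiM {1..n} (\<lambda>_. (borel :: real measure))"
    and k: "k \<in> {1..n}"
  shows "ennreal ((\<delta> / 2)\<^sup>2)
      \<le> ennreal ((\<delta> / 2)\<^sup>2) * coord_far_prob \<gamma> n est (spike n k \<delta>) (\<delta> / 2) k + risk \<gamma> n est (spike n k \<delta>)"
proof -
  interpret prob_space "noise \<gamma> n"
    using prob_space_noise[OF assms(1)] .
  define \<theta> where "\<theta> = spike n k \<delta>"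
  define D where "D = (\<delta> / 2)\<^sup>2"
  let ?x = "\<lambda>z. Defs.shift n \<theta> z"
  have [measurable]: "(\<lambda>z. est (?x z) i) \<in> borel_measurable (noise \<gamma> n)" if "i \<in> {1..n}" for i
    using est that by measurable
  \<comment> \<open>An estimate of the \<open>k\<close>-th coordinate that is \<open>\<delta>/2\<close>-close to \<open>0\<close> is \<open>\<delta>/2\<close>-far from \<open>\<delta>\<close>.\<close>
  have pointwise: "ennreal D \<le> ennreal D * indicator {x. \<delta> / 2 \<le> \<bar>est x k\<bar>} (?x z)
      + ennreal (\<Sum>i\<in>{1..n}. (est (?x z) i - \<theta> i)\<^sup>2)" for z
  proof (cases "\<delta> / 2 \<le> \<bar>est (?x z) k\<bar>")
    case False
    hence "\<bar>\<delta> / 2\<bar> \<le> \<bar>est (?x z) k - \<theta> k\<bar>"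
      using k unfolding \<theta>_def spike_def by auto
    hence "D \<le> (est (?x z) k - \<theta> k)\<^sup>2"
      unfolding D_def abs_le_square_iff .
    also have "\<dots> \<le> (\<Sum>i\<in>{1..n}. (est (?x z) i - \<theta> i)\<^sup>2)"
      using k by (intro member_le_sum) auto
    finally show ?thesis
      using False by (simp add: ennreal_leI)
  qed (simp add: add_increasing2)
  have "ennreal D = (\<integral>\<^sup>+z. ennreal D \<partial>noise \<gamma> n)"
    by (simp add: emeasure_space_1)
  also have "\<dots> \<le> (\<integral>\<^sup>+z. ennreal D * indicator {x. \<delta> / 2 \<le> \<bar>est x k\<bar>} (?x z)
      + ennreal (\<Sum>i\<in>{1..n}. (est (?x z) i - \<theta> i)\<^sup>2) \<partial>noise \<gamma> n)"
    by (intro nn_integral_mono pointwise)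
  also have "\<dots> = ennreal D * coord_far_prob \<gamma> n est \<theta> (\<delta> / 2) k + risk \<gamma> n est \<theta>"
    unfolding coord_far_prob_def risk_def
    using est k by (subst nn_integral_add) (measurable, simp add: nn_integral_cmult)
  finally show ?thesis
    unfolding D_def \<theta>_def .
qed

lemma coord_far_prob_spike_le:
  assumes "0 < \<gamma>" and est: "est \<in> PiM {1..n} (\<lambda>_. borel) \<rightarrow>\<^sub>M PiM {1..n} (\<lambda>_. (borel :: real measure))"
    and k: "k \<in> {1..n}" and dom: "shift_dominated (noise_marginal \<gamma>) \<delta> M q"
  shows "coord_far_prob \<gamma> n est (spike n k \<delta>) c k
      \<le> ennreal M * coord_far_prob \<gamma> n est (\<lambda>i\<in>{1..n}. 0) c k + ennreal q"
proof -
  define H :: "(nat \<Rightarrow> real) \<Rightarrow> ennreal"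
    where "H z = indicator {x. c \<le> \<bar>est x k\<bar>} (Defs.shift n (\<lambda>i\<in>{1..n}. 0) z)" for z
  \<comment> \<open>Observing the spike is observing zero with the \<open>k\<close>-th noise coordinate shifted by \<open>\<delta>\<close>.\<close>
  have "Defs.shift n (spike n k \<delta>) z = Defs.shift n (\<lambda>i\<in>{1..n}. 0) (z(k := z k + \<delta>))" for z
    unfolding Defs.shift_def spike_def by (auto simp: fun_eq_iff)
  hence "coord_far_prob \<gamma> n est (spike n k \<delta>) c k = (\<integral>\<^sup>+z. H (z(k := z k + \<delta>)) \<partial>noise \<gamma> n)"
    unfolding coord_far_prob_def H_def by simp
  also have "\<dots> \<le> ennreal M * (\<integral>\<^sup>+z. H z \<partial>noise \<gamma> n) + ennreal q"
    unfolding noise_def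
  proof (rule shift_dominated_PiM[OF prob_space_noise_marginal[OF assms(1)] _ _ k _ _ dom])
    show "H \<in> borel_measurable (PiM {1..n} (\<lambda>_. noise_marginal \<gamma>))"
      unfolding H_def noise_def[symmetric] using est k by measurable
  qed (auto simp: H_def indicator_def)
  finally show ?thesis
    unfolding coord_far_prob_def H_def .
qed

lemma le_of_test_error_bounds:
  fixes R :: ennreal and a b :: "nat \<Rightarrow> ennreal" and D M q :: real
  assumes "1 \<le> n" "0 \<le> D" "0 \<le> M" "0 \<le> q"
    and null: "ennreal D * (\<Sum>k\<in>{1..n}. a k) \<le> R"
    and alt: "\<And>k. k \<in> {1..n} \<Longrightarrow> ennreal D \<le> ennreal D * b k + R"
    and change: "\<And>k. k \<in> {1..n} \<Longrightarrow> b k \<le> ennreal M * a k + ennreal q"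
  shows "ennreal (D * (1 - q) * n / (n + M)) \<le> R"
proof (cases "R = \<top>")
  case False
  then obtain r where r: "R = ennreal r" "0 \<le> r"
    by (cases R) auto
  have "ennreal (n * D) = (\<Sum>k\<in>{1..n}. ennreal D)"
    using assms by (simp add: ennreal_mult ennreal_of_nat_eq_real_of_nat)
  also have "\<dots> \<le> (\<Sum>k\<in>{1..n}. ennreal D * b k + R)"
    by (intro sum_mono alt)
  also have "\<dots> \<le> (\<Sum>k\<in>{1..n}. ennreal D * (ennreal M * a k + ennreal q) + R)"
    by (intro sum_mono add_right_mono mult_left_mono change) auto
  also have "\<dots> = ennreal M * (ennreal D * (\<Sum>k\<in>{1..n}. a k)) + of_nat n * ennreal (D * q) + of_nat n * R"
    using assms by (simp add: sum.distrib sum_distrib_left distrib_left ennreal_mult mult_ac)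
  also have "\<dots> \<le> ennreal M * R + of_nat n * ennreal (D * q) + of_nat n * R"
    by (intro add_right_mono mult_left_mono null) auto
  also have "\<dots> = ennreal (M * r + n * (D * q) + n * r)"
    using r assms by (simp add: ennreal_mult ennreal_plus ennreal_of_nat_eq_real_of_nat)
  finally have "n * D \<le> M * r + n * (D * q) + n * r"
    using r assms by (subst (asm) ennreal_le_iff) (auto intro!: add_nonneg_nonneg mult_nonneg_nonneg)
  hence "D * (1 - q) * n \<le> r * (n + M)"
    by (simp add: algebra_simps)
  hence "D * (1 - q) * n / (n + M) \<le> r"
    using assms by (simp add: divide_le_eq)
  thus ?thesis
    using r by (simp add: ennreal_leI)
qed simp

lemma Sup_risk_ge_of_shift_dominated:
  assumes "0 < \<gamma>" "1 \<le> n"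
    and est: "est \<in> PiM {1..n} (\<lambda>_. borel) \<rightarrow>\<^sub>M PiM {1..n} (\<lambda>_. (borel :: real measure))"
    and "0 \<le> \<delta>" "0 \<le> M" "0 \<le> q" and dom: "shift_dominated (noise_marginal \<gamma>) \<delta> M q"
  shows "ennreal ((\<delta> / 2)\<^sup>2 * (1 - q) * n / (n + M)) \<le> (SUP \<theta>\<in>Theta3 n. risk \<gamma> n est \<theta>)"
proof (rule le_of_test_error_bounds)
  let ?R = "SUP \<theta>\<in>Theta3 n. risk \<gamma> n est \<theta>"
  let ?far = "coord_far_prob \<gamma> n est"
  have "(\<lambda>i\<in>{1..n}. 0) = spike n 1 0"
    by (simp add: spike_def)
  hence "(\<lambda>i\<in>{1..n}. 0) \<in> Theta3 n"
    using spike_in_Theta3 assms(2) by simp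
  hence "risk \<gamma> n est (\<lambda>i\<in>{1..n}. 0) \<le> ?R"
    by (rule SUP_upper)
  with risk_zero_ge_coord_far_probs[OF est, of "\<delta> / 2" \<gamma>] assms(4)
  show "ennreal ((\<delta> / 2)\<^sup>2) * (\<Sum>k\<in>{1..n}. ?far (\<lambda>i\<in>{1..n}. 0) (\<delta> / 2) k) \<le> ?R"
    by (auto intro: order_trans)
  show "ennreal ((\<delta> / 2)\<^sup>2) \<le> ennreal ((\<delta> / 2)\<^sup>2) * ?far (spike n k \<delta>) (\<delta> / 2) k + ?R"
    if "k \<in> {1..n}" for k
    by (rule order_trans[OF risk_spike_ge[OF assms(1) est that]])
      (intro add_left_mono SUP_upper spike_in_Theta3 that)
  show "?far (spike n k \<delta>) (\<delta> / 2) k \<le> ennreal M * ?far (\<lambda>i\<in>{1..n}. 0) (\<delta> / 2) k + ennreal q"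
    if "k \<in> {1..n}" for k
    using coord_far_prob_spike_le[OF assms(1) est that dom] .
qed (use assms in auto)

lemma Sup_risk_ge_heavy_tail:
  assumes "0 < \<gamma>" "\<gamma> \<le> 1" "1 \<le> n"
    and est: "est \<in> PiM {1..n} (\<lambda>_. borel) \<rightarrow>\<^sub>M PiM {1..n} (\<lambda>_. (borel :: real measure))"
  shows "ennreal (ln (exp 1 * n) powr (2 / \<gamma>) / (4 * (1 + exp 1))) \<le> (SUP \<theta>\<in>Theta3 n. risk \<gamma> n est \<theta>)"
proof -
  define L where "L = ln (exp 1 * n)"
  have L: "1 \<le> L"
    unfolding L_def using assms by (simp add: ln_mult)
  \<comment> \<open>The spike height \<open>\<delta>\<close> with \<open>\<delta>^\<gamma> = L\<close> makes the likelihood ratio at most \<open>e n\<close>.\<close>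
  define \<delta> where "\<delta> = L powr (1 / \<gamma>)"
  have "\<delta> powr \<gamma> = L"
    unfolding \<delta>_def using L assms by (simp add: powr_powr)
  hence M: "exp (\<delta> powr \<gamma>) = exp 1 * n"
    unfolding L_def using assms by simp
  have \<delta>_sq: "(\<delta> / 2)\<^sup>2 = L powr (2 / \<gamma>) / 4"
    unfolding \<delta>_def using L assms by (simp add: power_divide powr_powr powr_realpow[symmetric])
  have "ennreal ((\<delta> / 2)\<^sup>2 * (1 - 0) * n / (n + exp (\<delta> powr \<gamma>))) \<le> (SUP \<theta>\<in>Theta3 n. risk \<gamma> n est \<theta>)"
    using assms \<delta>_def L
    by (intro Sup_risk_ge_of_shift_dominated shift_dominated_noise_marginal_heavy_tail) auto
  also have "(\<delta> / 2)\<^sup>2 * (1 - 0) * n / (n + exp (\<delta> powr \<gamma>)) = L powr (2 / \<gamma>) / (4 * (1 + exp 1))"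
  proof -
    have "n + exp 1 * n = n * (1 + exp 1)"
      by (simp add: algebra_simps)
    thus ?thesis
      unfolding M \<delta>_sq using assms by simp
  qed
  finally show ?thesis
    unfolding L_def .
qed

lemma light_tail_spike_height:
  fixes \<gamma> L :: real
  assumes "1 \<le> \<gamma>" "\<gamma> \<le> 2" "1 \<le> L"
  defines "\<delta> \<equiv> max 64 ((L / 4) powr (1 / \<gamma>))"
  shows "L powr (2 / \<gamma>) / 16 \<le> \<delta>\<^sup>2" and "(2 * \<delta>) powr \<gamma> \<le> 16384 + L"
proof -
  define b where "b = (L / 4) powr (1 / \<gamma>)"
  have b: "0 < b" "b powr \<gamma> = L / 4"
    unfolding b_def using assms by (auto simp: powr_powr)
  have "4 powr (2 / \<gamma>) \<le> 4 powr (2::real)"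
    using assms by (intro powr_mono) (auto simp: field_simps)
  hence "L powr (2 / \<gamma>) / 16 \<le> L powr (2 / \<gamma>) / 4 powr (2 / \<gamma>)"
    by (intro divide_left_mono) auto
  also have "\<dots> = b\<^sup>2"
    unfolding b_def using assms by (simp add: powr_divide powr_powr powr_realpow[symmetric])
  also have "\<dots> \<le> \<delta>\<^sup>2"
    unfolding \<delta>_def b_def[symmetric] using b by (intro power_mono) auto
  finally show "L powr (2 / \<gamma>) / 16 \<le> \<delta>\<^sup>2" .
  have "64 powr \<gamma> \<le> 64 powr (2::real)"
    using assms by (intro powr_mono) auto
  hence "\<delta> powr \<gamma> \<le> 4096 + L / 4"
    unfolding \<delta>_def b_def[symmetric] using b assms by (auto simp: max_def)
  moreover have "2 powr \<gamma> \<le> 2 powr (2::real)"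
    using assms by (intro powr_mono) auto
  ultimately have "2 powr \<gamma> * \<delta> powr \<gamma> \<le> 4 * (4096 + L / 4)"
    by (intro mult_mono) auto
  thus "(2 * \<delta>) powr \<gamma> \<le> 16384 + L"
    unfolding \<delta>_def by (simp add: powr_mult)
qed

lemma Sup_risk_ge_light_tail:
  assumes "1 \<le> \<gamma>" "\<gamma> \<le> 2" "1 \<le> n"
    and est: "est \<in> PiM {1..n} (\<lambda>_. borel) \<rightarrow>\<^sub>M PiM {1..n} (\<lambda>_. (borel :: real measure))"
  shows "ennreal (ln (exp 1 * n) powr (2 / \<gamma>) / (128 * (1 + exp 16385))) \<le> (SUP \<theta>\<in>Theta3 n. risk \<gamma> n est \<theta>)"
proof -
  define L where "L = ln (exp 1 * n)"
  have L: "1 \<le> L"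
    unfolding L_def using assms by (simp add: ln_mult)
  \<comment> \<open>Here the likelihood ratio is only controlled near the spike; \<open>\<delta> \<ge> 64\<close> keeps the tail mass
    \<open>q\<close> below \<open>1/2\<close>, while \<open>\<delta>^\<gamma> \<approx> L/4\<close> keeps \<open>M\<close> of order \<open>n\<close>.\<close>
  define \<delta> where "\<delta> = max 64 ((L / 4) powr (1 / \<gamma>))"
  define M where "M = exp ((2 * \<delta>) powr \<gamma>)"
  define q where "q = 4 * exp 1 / \<delta>"
  have \<delta>: "64 \<le> \<delta>"
    unfolding \<delta>_def by simp
  have "ennreal ((\<delta> / 2)\<^sup>2 * (1 - q) * n / (n + M)) \<le> (SUP \<theta>\<in>Theta3 n. risk \<gamma> n est \<theta>)"
    unfolding M_def q_def using assms \<delta>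
    by (intro Sup_risk_ge_of_shift_dominated shift_dominated_noise_marginal) auto
  moreover have "L powr (2 / \<gamma>) / (128 * (1 + exp 16385)) \<le> (\<delta> / 2)\<^sup>2 * (1 - q) * n / (n + M)"
  proof -
    have "M \<le> exp (16384 + L)"
      unfolding M_def \<delta>_def using light_tail_spike_height(2)[OF assms(1,2) L] by simp
    also have "\<dots> = exp 16384 * (exp 1 * n)"
      unfolding L_def using assms by (simp add: exp_add)
    also have "\<dots> = exp 16385 * n"
      by (simp add: mult.assoc[symmetric] flip: exp_add)
    finally have "n + M \<le> n * (1 + exp 16385)"
      by (simp add: algebra_simps)
    moreover have "0 < M" "0 < 1 + exp (16385::real)"
      unfolding M_def by (simp_all add: add_pos_pos)
    ultimately have "1 / (1 + exp 16385) \<le> n / (n + M)"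
      using assms by (simp add: field_simps)
    moreover have "1 / 2 \<le> 1 - q"
      unfolding q_def using \<delta> exp_le by (simp add: field_simps)
    moreover have "L powr (2 / \<gamma>) / 64 \<le> (\<delta> / 2)\<^sup>2"
      using light_tail_spike_height(1)[OF assms(1,2) L] unfolding \<delta>_def by (simp add: power_divide)
    ultimately have "L powr (2 / \<gamma>) / 64 * (1 / 2) * (1 / (1 + exp 16385)) \<le> (\<delta> / 2)\<^sup>2 * (1 - q) * (n / (n + M))"
      by (intro mult_mono) auto
    thus ?thesis
      by (simp add: field_simps)
  qed
  ultimately show ?thesis
    unfolding L_def by (meson ennreal_leI order_trans)
qed

theorem mainTheorem7:
  shows "\<exists>c > (0::real). \<forall>\<gamma> n est.
           0 < \<gamma> \<and> \<gamma> \<le> 2 \<and> 1 \<le> n \<and>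
           est \<in> PiM {1..n} (\<lambda>_. borel) \<rightarrow>\<^sub>M PiM {1..n} (\<lambda>_. (borel :: real measure)) \<longrightarrow>
           (SUP \<theta>\<in>Theta3 n. risk \<gamma> n est \<theta>) \<ge> ennreal (c * (ln (exp 1 * real n)) powr (2 / \<gamma>))"
proof (intro exI[of _ "1 / (128 * (1 + exp 16385))"] conjI allI impI)
  fix \<gamma> :: real and n :: nat and est :: "(nat \<Rightarrow> real) \<Rightarrow> nat \<Rightarrow> real"
  assume "0 < \<gamma> \<and> \<gamma> \<le> 2 \<and> 1 \<le> n \<and> est \<in> PiM {1..n} (\<lambda>_. borel) \<rightarrow>\<^sub>M PiM {1..n} (\<lambda>_. borel)"
  hence \<gamma>: "0 < \<gamma>" "\<gamma> \<le> 2" and n: "1 \<le> n"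
    and est: "est \<in> PiM {1..n} (\<lambda>_. borel) \<rightarrow>\<^sub>M PiM {1..n} (\<lambda>_. (borel :: real measure))"
    by auto
  define L where "L = ln (exp 1 * real n) powr (2 / \<gamma>)"
  have "ennreal (L / (128 * (1 + exp 16385))) \<le> (SUP \<theta>\<in>Theta3 n. risk \<gamma> n est \<theta>)"
  proof (cases "\<gamma> \<le> 1")
    case True
    have "4 * (1 + exp 1) \<le> 128 * (1 + exp (16385::real))"
      using exp_le_cancel_iff[of 1 "16385::real"] exp_gt_zero[of "16385::real"] by argo
    hence "L / (128 * (1 + exp 16385)) \<le> L / (4 * (1 + exp 1))"
      unfolding L_def by (intro divide_left_mono) (auto simp: add_pos_pos)
    with Sup_risk_ge_heavy_tail[OF \<gamma>(1) True n est] show ?thesis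
      unfolding L_def by (meson ennreal_leI order_trans)
  qed (use Sup_risk_ge_light_tail[OF _ \<gamma>(2) n est] in \<open>simp add: L_def\<close>)
  thus "ennreal (1 / (128 * (1 + exp 16385)) * ln (exp 1 * real n) powr (2 / \<gamma>)) \<le> (SUP \<theta>\<in>Theta3 n. risk \<gamma> n est \<theta>)"
    unfolding L_def by simp
qed (simp add: add_pos_pos)

end
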